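(* Let $(a_n)_{n\ge1}$ be an integer sequence such that $a_1=0$, $p\mid a_p$ for every prime $p$, and $a_n=a_{\operatorname{rad}(n)}$ for all $n>1$. Then $(a_n)$ is an Euler–Gauss sequence, i.e. $A_n^+\equiv A_n^-\pmod n$ for all $n\ge1$.
   Context: $\mu$ is the Möbius function and $\operatorname{rad}(n)=\prod_{p\mid n,\,p\text{ prime}}p$. For $n\ge1$, $A_n^+=\prod_{d\mid n,\ \mu(d)=1} a_{n/d}$ and $A_n^-=\prod_{d\mid n,\ \mu(d)=-1} a_{n/d}$ (empty products equal $1$). *)

theory Defs
  imports "HOL-Computational_Algebra.Computational_Algebra" "HOL-Number_Theory.Number_Theory"
begin

definition moebius :: "nat \<Rightarrow> int" where
  "moebius n = (if squarefree n then (-1) ^ card (prime_factors n) else 0)"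

definition rad :: "nat \<Rightarrow> nat" where
  "rad n = (\<Prod>p\<in>prime_factors n. p)"

definition A_plus :: "(nat \<Rightarrow> int) \<Rightarrow> nat \<Rightarrow> int" where
  "A_plus a n = (\<Prod>d\<in>{d. d dvd n \<and> moebius d = 1}. a (n div d))"

definition A_minus :: "(nat \<Rightarrow> int) \<Rightarrow> nat \<Rightarrow> int" where
  "A_minus a n = (\<Prod>d\<in>{d. d dvd n \<and> moebius d = -1}. a (n div d))"

definition euler_gauss :: "(nat \<Rightarrow> int) \<Rightarrow> bool" where
  "euler_gauss a \<longleftrightarrow> (\<forall>n\<ge>1. [A_plus a n = A_minus a n] (mod int n))"

end

theory Submission
  imports Defs
begin

(* If n is not squarefree, pick a prime q with q^2 dividing n. Multiplying or dividing a
   squarefree divisor d of n by q flips the sign of mu(d) and does not change the radical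
   of n/d, because q divides both quotients; this involution matches the factors of A_n^+
   with those of A_n^-, so A_n^+ = A_n^-.
   If n is squarefree, the divisor d = n contributes the factor a_1 = 0 to the product of
   sign mu(n), while the product of the opposite sign contains a_p for every prime p | n
   (from d = n/p), so it is divisible by the product of these primes, which is n. *)

definition A_sign :: "(nat \<Rightarrow> int) \<Rightarrow> nat \<Rightarrow> int \<Rightarrow> int" where
  "A_sign a n s = (\<Prod>d\<in>{d. d dvd n \<and> moebius d = s}. a (n div d))"

lemma A_plus_eq_A_sign: "A_plus a n = A_sign a n 1"
  by (simp add: A_plus_def A_sign_def)

lemma A_minus_eq_A_sign: "A_minus a n = A_sign a n (-1)"
  by (simp add: A_minus_def A_sign_def)

lemma squarefree_if_moebius_nonzero: "moebius d \<noteq> 0 \<Longrightarrow> squarefree d"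
  by (auto simp: moebius_def split: if_splits)

lemma moebius_squarefree_cases:
  assumes "squarefree n"
  shows "moebius n = 1 \<or> moebius n = -1"
  using assms by (cases "even (card (prime_factors n))") (simp_all add: moebius_def)

lemma squarefree_pos_nat: "squarefree (n :: nat) \<Longrightarrow> n > 0"
  by (metis not_squarefree_0 gr0I)

lemma not_dvd_if_squarefree_mult_prime:
  fixes e q :: nat
  assumes "squarefree (e * q)" "prime q"
  shows "\<not> q dvd e"
proof
  assume "q dvd e"
  then have "q^2 dvd e * q" by (simp add: power2_eq_square)
  with assms show False by (metis not_prime_unit squarefreeD)
qed

lemma moebius_mult_prime:
  assumes "squarefree e" "prime q" "\<not> q dvd e"
  shows "moebius (e * q) = - moebius e"
proof -
  have "coprime e q"
    using assms by (metis coprime_commute prime_imp_coprime)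
  then have "squarefree (e * q)"
    using assms by (intro squarefree_mult_coprime) (auto intro: squarefree_prime)
  moreover have "prime_factors (e * q) = insert q (prime_factors e)"
    using assms squarefree_pos_nat[of e]
    by (subst prime_factors_product) (auto simp: prime_prime_factors)
  moreover have "q \<notin> prime_factors e"
    using assms(3) by (auto simp: in_prime_factors_iff)
  ultimately show ?thesis
    using assms(1) by (simp add: moebius_def)
qed

lemma rad_mult_prime_dvd:
  assumes "prime q" "q dvd m"
  shows "rad (m * q) = rad m"
proof (cases "m = 0")
  case False
  with assms have "prime_factors (m * q) = prime_factors m"
    by (subst prime_factors_product) (auto simp: prime_prime_factors in_prime_factors_iff)
  then show ?thesis by (simp add: rad_def)
qed simp

lemma rad_eq_1_iff:
  assumes "m > 0"
  shows "rad m = 1 \<longleftrightarrow> m = 1"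
proof
  assume rad1: "rad m = 1"
  show "m = 1"
  proof (rule ccontr)
    assume "m \<noteq> 1"
    then obtain p where p: "prime p" "p dvd m"
      using prime_factor_nat by blast
    with assms have "p dvd rad m"
      unfolding rad_def by (intro dvd_prodI) (auto simp: in_prime_factors_iff)
    with p(1) rad1 show False by simp
  qed
qed (simp add: rad_def)

lemma rad_eq_self_if_squarefree:
  assumes "squarefree n"
  shows "rad n = n"
proof -
  have "n \<noteq> 0"
    using assms squarefree_pos_nat by blast
  then have "n = (\<Prod>p\<in>prime_factors n. p ^ multiplicity p n)"
    by (simp add: prime_factorization_nat)
  also have "\<dots> = rad n"
    using assms squarefree_factorial_semiring'[OF \<open>n \<noteq> 0\<close>] unfolding rad_def
    by (intro prod.cong) auto
  finally show ?thesis by simp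
qed

lemma eq_if_rad_eq:
  fixes a :: "nat \<Rightarrow> 'b"
  assumes a_rad: "\<And>n. n > 1 \<Longrightarrow> a n = a (rad n)"
    and m: "m > 0" "m' > 0" and rad_eq: "rad m = rad m'"
  shows "a m = a m'"
proof (cases "m = 1")
  case True
  with rad_eq have "rad m' = 1" by (simp add: rad_def)
  with m(2) have "m' = 1" by (metis rad_eq_1_iff)
  with True show ?thesis by simp
next
  case False
  with m rad_eq have "m' \<noteq> 1" by (metis rad_eq_1_iff)
  with False m have "m > 1" "m' > 1" by simp_all
  with rad_eq show ?thesis by (simp add: a_rad)
qed

definition toggle_factor :: "nat \<Rightarrow> nat \<Rightarrow> nat" where
  "toggle_factor q d = (if q dvd d then d div q else d * q)"

lemma toggle_factor_cases:
  assumes "prime q" "squarefree d"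
  obtains e where "\<not> q dvd e" "squarefree e" "e dvd d"
    "d = e \<and> toggle_factor q d = e * q \<or> d = e * q \<and> toggle_factor q d = e"
proof (cases "q dvd d")
  case True
  then obtain e where d: "d = e * q" by (metis dvdE mult.commute)
  with assms have "\<not> q dvd e" "squarefree e"
    by (auto dest: squarefree_multD not_dvd_if_squarefree_mult_prime)
  with that d assms show ?thesis by (simp add: toggle_factor_def prime_gt_0_nat)
next
  case False
  with that assms show ?thesis by (simp add: toggle_factor_def)
qed

lemma toggle_factor_toggle_factor:
  assumes "prime q" "squarefree d"
  shows "toggle_factor q (toggle_factor q d) = d"
  by (rule toggle_factor_cases[OF assms]) (auto simp: toggle_factor_def prime_gt_0_nat assms)

lemma moebius_toggle_factor:
  assumes "prime q" "squarefree d"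
  shows "moebius (toggle_factor q d) = - moebius d"
  by (rule toggle_factor_cases[OF assms]) (auto simp: moebius_mult_prime assms)

lemma mult_prime_square_dvd:
  fixes e q n :: nat
  assumes "prime q" "\<not> q dvd e" "e dvd n" "q^2 dvd n"
  shows "e * q^2 dvd n"
proof -
  have "coprime e q"
    using assms by (metis coprime_commute prime_imp_coprime)
  with assms show ?thesis by (simp add: divides_mult)
qed

lemma rad_div_mult_prime:
  assumes "prime q" "e * q^2 dvd n"
  shows "rad (n div e) = rad (n div (e * q))"
proof (cases "e = 0")
  case False
  from assms obtain k where n: "n = e * q^2 * k" by blast
  with False assms have "n div e = (q * k) * q" "n div (e * q) = q * k"
    by (simp_all add: power2_eq_square prime_gt_0_nat)
  with assms show ?thesis by (simp add: rad_mult_prime_dvd)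
qed (use assms in simp)

lemma toggle_factor_cases_dvd:
  assumes "prime q" "q^2 dvd n" "squarefree d" "d dvd n"
  obtains e where "e * q^2 dvd n"
    "d = e \<and> toggle_factor q d = e * q \<or> d = e * q \<and> toggle_factor q d = e"
proof (rule toggle_factor_cases[OF assms(1,3)])
  fix e
  assume e: "\<not> q dvd e" "e dvd d"
    and "d = e \<and> toggle_factor q d = e * q \<or> d = e * q \<and> toggle_factor q d = e"
  moreover have "e * q^2 dvd n"
    using assms e by (intro mult_prime_square_dvd) (auto intro: dvd_trans)
  ultimately show thesis
    using that by blast
qed

lemma toggle_factor_dvd:
  assumes "prime q" "q^2 dvd n" "squarefree d" "d dvd n"
  shows "toggle_factor q d dvd n"
  by (rule toggle_factor_cases_dvd[OF assms])
    (use assms(4) in \<open>auto simp: power2_eq_square intro: dvd_mult_left\<close>)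

lemma rad_div_toggle_factor:
  assumes "prime q" "q^2 dvd n" "squarefree d" "d dvd n"
  shows "rad (n div toggle_factor q d) = rad (n div d)"
  by (rule toggle_factor_cases_dvd[OF assms]) (metis rad_div_mult_prime[OF assms(1)])

lemma A_sign_neg_if_not_squarefree:
  fixes a :: "nat \<Rightarrow> int"
  assumes a_rad: "\<And>n. n > 1 \<Longrightarrow> a n = a (rad n)"
    and n: "n > 0" "\<not> squarefree n"
  shows "A_sign a n (-s) = A_sign a n s"
proof (cases "s = 0")
  case False
  from n obtain q where q: "prime q" "q^2 dvd n"
    using squarefree_factorial_semiring[of n] by auto
  have toggle_in_class: "toggle_factor q d \<in> {d. d dvd n \<and> moebius d = - t}"
    and toggle_toggle: "toggle_factor q (toggle_factor q d) = d"
    and a_toggle: "a (n div toggle_factor q d) = a (n div d)"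
    if d: "d \<in> {d. d dvd n \<and> moebius d = t}" and "t \<noteq> 0" for d t
  proof -
    from that have sqf: "squarefree d" "d dvd n"
      by (auto intro: squarefree_if_moebius_nonzero)
    with q show "toggle_factor q d \<in> {d. d dvd n \<and> moebius d = - t}"
      using d by (simp add: toggle_factor_dvd moebius_toggle_factor)
    from q sqf show "toggle_factor q (toggle_factor q d) = d"
      by (simp add: toggle_factor_toggle_factor)
    from q sqf have "toggle_factor q d dvd n"
      by (simp add: toggle_factor_dvd)
    with q sqf n(1) show "a (n div toggle_factor q d) = a (n div d)"
      by (intro eq_if_rad_eq[where a = a, OF a_rad])
        (auto intro!: gr0I simp: rad_div_toggle_factor dvd_div_eq_0_iff)
  qed
  from False show ?thesis
    unfolding A_sign_def
    by (intro prod.reindex_bij_witness[of _ "toggle_factor q" "toggle_factor q"])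
      (use toggle_in_class toggle_toggle a_toggle in fastforce)+
qed simp

lemma A_sign_moebius_eq_0:
  fixes a :: "nat \<Rightarrow> int"
  assumes "a 1 = 0" "n > 0"
  shows "A_sign a n (moebius n) = 0"
  unfolding A_sign_def
proof (rule prod_zero)
  show "finite {d. d dvd n \<and> moebius d = moebius n}"
    using assms(2) by (auto intro: finite_subset[OF _ finite_divisors_nat[of n]])
  show "\<exists>d\<in>{d. d dvd n \<and> moebius d = moebius n}. a (n div d) = 0"
    using assms by (intro bexI[of _ n]) auto
qed

lemma dvd_A_sign_neg_moebius:
  fixes a :: "nat \<Rightarrow> int"
  assumes a_prime: "\<And>p. prime p \<Longrightarrow> int p dvd a p" and sqf: "squarefree n"
  shows "int n dvd A_sign a n (- moebius n)"
proof -
  have n: "n > 0"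
    using sqf by (rule squarefree_pos_nat)
  have cofactor: "n div p dvd n" "n div (n div p) = p" "moebius (n div p) = - moebius n"
    if "p \<in> prime_factors n" for p
  proof -
    from that have p: "prime p" "p dvd n"
      by (auto simp: in_prime_factors_iff)
    then show div_dvd: "n div p dvd n" and "n div (n div p) = p"
      using n by (auto elim!: dvdE simp: prime_gt_0_nat)
    from p have n_eq: "n div p * p = n"
      by simp
    have "squarefree (n div p)"
      using squarefree_mono[OF div_dvd sqf] .
    moreover have "\<not> p dvd n div p"
      using not_dvd_if_squarefree_mult_prime[of "n div p" p] sqf p(1) n_eq by simp
    ultimately show "moebius (n div p) = - moebius n"
      using moebius_mult_prime[of "n div p" p] p(1) n_eq by simp
  qed
  then have inj: "inj_on (\<lambda>p. n div p) (prime_factors n)"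
    by (intro inj_on_inverseI[where g = "\<lambda>d. n div d"])
  have "int n = int (\<Prod>p\<in>prime_factors n. p)"
    using rad_eq_self_if_squarefree[OF sqf] by (simp add: rad_def)
  also have "\<dots> = (\<Prod>p\<in>prime_factors n. int p)"
    by (rule of_nat_prod)
  also have "\<dots> dvd (\<Prod>p\<in>prime_factors n. a p)"
    using a_prime by (intro prod_dvd_prod) (auto simp: in_prime_factors_iff)
  also have "\<dots> = (\<Prod>d\<in>(\<lambda>p. n div p) ` prime_factors n. a (n div d))"
    using cofactor by (simp add: prod.reindex[OF inj])
  also have "\<dots> dvd A_sign a n (- moebius n)"
    unfolding A_sign_def using cofactor n
    by (intro prod_dvd_prod_subset finite_subset[OF _ finite_divisors_nat[of n]]) auto
  finally show ?thesis .
qed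

lemma cong_A_sign_if_squarefree:
  fixes a :: "nat \<Rightarrow> int"
  assumes "a 1 = 0" "\<And>p. prime p \<Longrightarrow> int p dvd a p" "squarefree n"
  shows "[A_sign a n 1 = A_sign a n (-1)] (mod int n)"
proof -
  from assms have "[A_sign a n (- moebius n) = A_sign a n (moebius n)] (mod int n)"
    by (simp add: A_sign_moebius_eq_0 dvd_A_sign_neg_moebius cong_0_iff squarefree_pos_nat)
  with moebius_squarefree_cases[OF assms(3)] show ?thesis
    by (auto intro: cong_sym)
qed

theorem theorem9:
  fixes a :: "nat \<Rightarrow> int"
  assumes "a 1 = 0"
    and "\<And>p. prime p \<Longrightarrow> int p dvd a p"
    and "\<And>n. n > 1 \<Longrightarrow> a n = a (rad n)"
  shows "euler_gauss a"
  unfolding euler_gauss_def A_plus_eq_A_sign A_minus_eq_A_sign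
proof (intro allI impI)
  fix n :: nat
  assume "n \<ge> 1"
  show "[A_sign a n 1 = A_sign a n (-1)] (mod int n)"
  proof (cases "squarefree n")
    case True
    with assms(1,2) show ?thesis by (rule cong_A_sign_if_squarefree)
  next
    case False
    with \<open>n \<ge> 1\<close> show ?thesis
      using A_sign_neg_if_not_squarefree[where a = a, OF assms(3), of n 1] by simp
  qed
qed

end
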